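(* Let $\mu>0$, $\delta>0$ and $q>0$, and consider the eigenvalue problem on the interval $x\in(\log(q)/\delta,\infty)$: $$-\frac12\,\psi''(x)-\frac{\mu\,e^{-\delta x}}{1-q\,e^{-\delta x}}\,\psi(x)=E\,\psi(x),\qquad \psi(\log(q)/\delta)=\psi(\infty)=0,\qquad \int_{\log(q)/\delta}^\infty|\psi(x)|^2\,dx<\infty .$$ Then the bound-state eigenvalues of this problem are exactly the numbers $$E_n=-\frac12\left(\frac{\mu}{q\,\delta\,(1+n)}-\frac{\delta\,(1+n)}{2}\right)^2$$ for the integers $n$ with $0\le n<-1+\frac1\delta\sqrt{\frac{2\mu}{q}}$ (so that bound states exist only when $0<q<2\mu/\delta^2$), and the eigenfunction belonging to $E_n$ is, up to a normalization constant $N_n$, $$\psi_n(x)=N_n\left(1-q\,e^{-\delta x}\right)e^{-\left(\frac{\mu}{q\,\delta\,(1+n)}-\frac{(n+1)\delta}{2}\right)x}\;{}_2F_1\!\left(-n,\,1+\frac{2\mu}{q\,\delta^2(1+n)};\,\frac{2\mu}{q\,\delta^2(1+n)}-n;\,q\,e^{-\delta x}\right).$$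
   Context: ${}_2F_1(\alpha,\beta;\gamma;z)=\sum_{k\ge0}\frac{(\alpha)_k(\beta)_k}{(\gamma)_k\,k!}z^k$ is the Gauss hypergeometric function, with $(a)_k=a(a+1)\cdots(a+k-1)$ the Pochhammer symbol; for $\alpha=-n$ it is a polynomial of degree $n$ in $z$. *)

theory Defs
  imports "HOL-Analysis.Analysis"
begin

definition hyp2F1 :: "real \<Rightarrow> real \<Rightarrow> real \<Rightarrow> real \<Rightarrow> real" where
  "hyp2F1 a b c z =
     (\<Sum>k. pochhammer a k * pochhammer b k / (pochhammer c k * fact k) * z ^ k)"

definition pot :: "real \<Rightarrow> real \<Rightarrow> real \<Rightarrow> real \<Rightarrow> real" where
  "pot \<mu> \<delta> q x = - (\<mu> * exp (- \<delta> * x) / (1 - q * exp (- \<delta> * x)))"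

definition bound_state :: "real \<Rightarrow> real \<Rightarrow> real \<Rightarrow> real \<Rightarrow> (real \<Rightarrow> complex) \<Rightarrow> bool" where
  "bound_state \<mu> \<delta> q E \<psi> \<longleftrightarrow>
     (let a = ln q / \<delta> in
      (\<exists>\<psi>' \<psi>''. \<forall>x>a.
          (\<psi> has_vector_derivative \<psi>' x) (at x) \<and>
          (\<psi>' has_vector_derivative \<psi>'' x) (at x) \<and>
          - (1/2) * \<psi>'' x + of_real (pot \<mu> \<delta> q x) * \<psi> x = of_real E * \<psi> x) \<and>
      (\<psi> \<longlongrightarrow> 0) (at_right a) \<and>
      (\<psi> \<longlongrightarrow> 0) at_top \<and>
      (\<lambda>x. (cmod (\<psi> x))\<^sup>2) integrable_on {a<..} \<and>
      (\<exists>x>a. \<psi> x \<noteq> 0))"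

definition energy :: "real \<Rightarrow> real \<Rightarrow> real \<Rightarrow> nat \<Rightarrow> real" where
  "energy \<mu> \<delta> q n =
     - (1/2) * (\<mu> / (q * \<delta> * (1 + real n)) - \<delta> * (1 + real n) / 2)\<^sup>2"

definition eigfun :: "real \<Rightarrow> real \<Rightarrow> real \<Rightarrow> nat \<Rightarrow> real \<Rightarrow> real" where
  "eigfun \<mu> \<delta> q n x =
     (1 - q * exp (- \<delta> * x)) *
     exp (- (\<mu> / (q * \<delta> * (1 + real n)) - (real n + 1) * \<delta> / 2) * x) *
     hyp2F1 (- real n) (1 + 2 * \<mu> / (q * \<delta>\<^sup>2 * (1 + real n)))
            (2 * \<mu> / (q * \<delta>\<^sup>2 * (1 + real n)) - real n) (q * exp (- \<delta> * x))"

end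

theory Submission
  imports Defs "HOL-Real_Asymp.Real_Asymp"
begin

(* Put k = csqrt (-2 E), so Re k \<ge> 0, and Y = q e^(-\<delta> x), which runs through (0, 1) on the interval.
   The ansatz \<psi> = e^(-k x) (1 - Y) F(Y) turns the Schroedinger equation into the hypergeometric
   equation for F with parameter g = 1 + 2 k / \<delta>; its power series solution gives a solution u
   (the Jost solution) which stays bounded at infinity and is not identically zero there.
   A bound state has vanishing Wronskian with u, hence is a multiple of u.  Decay at infinity
   forces Re k > 0.  At the left endpoint Y tends to 1, and by Abel's theorem (1 - Y) F(Y) tends
   to the limit of the coefficients of F, an infinite product of the factors
   1 - \<lambda> / ((g + j) (j + 1)) with \<lambda> = 2 \<mu> / (q \<delta>^2).  It vanishes only if one factor does,
   i.e. \<lambda> = (g + n) (n + 1): this quantizes k, hence E, and makes F the terminating series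
   2F1(-n, ...) of the eigenfunction. *)

section \<open>Gauss hypergeometric series as products of coefficient ratios\<close>

(* For a + b = g + 1 and a b = g - l the series hg_fps l g is 2F1(a, b; g; z)
   (hg_fps_nth_eq_pochhammer); writing its coefficients as products of the ratios hg_ratio
   makes their limit an infinite product. *)
definition hg_ratio :: "complex \<Rightarrow> complex \<Rightarrow> nat \<Rightarrow> complex" where
  "hg_ratio l g j = 1 - l / ((g + of_nat j) * (of_nat j + 1))"

definition hg_fps :: "complex \<Rightarrow> complex \<Rightarrow> complex fps" where
  "hg_fps l g = Abs_fps (\<lambda>m. \<Prod>j<m. hg_ratio l g j)"

lemma hg_fps_nth_Suc: "fps_nth (hg_fps l g) (Suc m) = fps_nth (hg_fps l g) m * hg_ratio l g m"
  by (simp add: hg_fps_def)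

lemma hg_denominator_nonzero:
  assumes "Re g \<ge> 1"
  shows "(g + of_nat j) * (of_nat j + 1) \<noteq> 0"
  using assms by (auto simp: complex_eq_iff)

lemma norm_hg_ratio_minus_one_le:
  assumes "Re g \<ge> 1"
  shows "norm (hg_ratio l g j - 1) \<le> norm l / (real j + 1)\<^sup>2"
proof -
  have "real j + 1 \<le> Re (g + of_nat j)" using assms by simp
  also have "\<dots> \<le> norm (g + of_nat j)" by (rule complex_Re_le_cmod)
  moreover have "norm (of_nat j + 1 :: complex) = real j + 1"
    by (metis norm_of_nat of_nat_Suc add.commute)
  ultimately have "(real j + 1)\<^sup>2 \<le> norm ((g + of_nat j) * (of_nat j + 1))"
    by (simp add: norm_mult power2_eq_square mult_right_mono)
  then show ?thesis
    by (simp add: hg_ratio_def norm_divide frac_le)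
qed

lemma abs_convergent_prod_hg_ratio:
  assumes "Re g \<ge> 1"
  shows "abs_convergent_prod (hg_ratio l g)"
proof (rule summable_imp_abs_convergent_prod, rule summable_comparison_test')
  have "summable (\<lambda>j. inverse (real (Suc j) ^ 2))"
    by (subst summable_Suc_iff) (rule inverse_power_summable, simp)
  then show "summable (\<lambda>j. norm l / (real j + 1)\<^sup>2)"
    by (simp add: summable_mult divide_inverse add.commute)
qed (use norm_hg_ratio_minus_one_le[OF assms] in simp)

lemma prodinf_hg_ratio_eq_0_iff:
  assumes "Re g \<ge> 1"
  shows "prodinf (hg_ratio l g) = 0 \<longleftrightarrow> (\<exists>n. hg_ratio l g n = 0)"
  using has_prod_eq_0_iff[OF convergent_prod_has_prod[OF
      abs_convergent_prod_imp_convergent_prod[OF abs_convergent_prod_hg_ratio[OF assms]]]]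
  by (metis rangeE rangeI)

lemma hg_fps_nth_tendsto:
  assumes "Re g \<ge> 1"
  shows "fps_nth (hg_fps l g) \<longlonglongrightarrow> prodinf (hg_ratio l g)"
proof -
  have "convergent_prod (hg_ratio l g)"
    by (rule abs_convergent_prod_imp_convergent_prod[OF abs_convergent_prod_hg_ratio[OF assms]])
  then have "(\<lambda>m. \<Prod>j\<le>m. hg_ratio l g j) \<longlonglongrightarrow> prodinf (hg_ratio l g)"
    by (rule convergent_prod_LIMSEQ)
  then have "(\<lambda>m. fps_nth (hg_fps l g) (Suc m)) \<longlonglongrightarrow> prodinf (hg_ratio l g)"
    by (simp add: hg_fps_def lessThan_Suc_atMost)
  then show ?thesis
    by (rule LIMSEQ_imp_Suc)
qed

lemma fps_conv_radius_ge_1_if_Bseq: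
  fixes f :: "'a :: {banach, real_normed_div_algebra} fps"
  assumes "Bseq (fps_nth f)"
  shows "fps_conv_radius f \<ge> 1"
  unfolding fps_conv_radius_def
proof (rule conv_radius_geI_ex')
  obtain B where B: "\<And>n. norm (fps_nth f n) \<le> B" using assms by (auto simp: Bseq_def)
  fix r :: real assume "0 < r" "ereal r < 1"
  then have "summable (\<lambda>n. B * r ^ n)" by (intro summable_mult summable_geometric) auto
  then show "summable (\<lambda>n. fps_nth f n * of_real r ^ n)"
    by (rule summable_comparison_test') (use B \<open>0 < r\<close> in \<open>simp add: norm_mult norm_power mult_right_mono\<close>)
qed

lemma fps_conv_radius_hg_fps:
  assumes "Re g \<ge> 1"
  shows "fps_conv_radius (hg_fps l g) \<ge> 1"
  using hg_fps_nth_tendsto[OF assms]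
  by (intro fps_conv_radius_ge_1_if_Bseq convergent_imp_Bseq convergentI)

(* Coefficientwise this is the recursion (m + 1) (g + m) c(m + 1) = ((m + 1) (g + m) - l) c(m). *)
lemma hg_fps_ode:
  fixes l g :: complex
  assumes g: "Re g \<ge> 1"
  defines "F \<equiv> hg_fps l g"
  shows "fps_X * (1 - fps_X) * fps_deriv (fps_deriv F)
    + (fps_const g - fps_const (g + 2) * fps_X) * fps_deriv F - fps_const (g - l) * F = 0"
    (is "?lhs = 0")
proof (rule fps_ext)
  fix m
  have rec: "fps_nth F (Suc m) * ((of_nat m + 1) * (g + of_nat m))
      = fps_nth F m * ((g + of_nat m) * (of_nat m + 1) - l)"
    using hg_denominator_nonzero[OF g, of m]
    by (simp add: F_def hg_fps_nth_Suc hg_ratio_def field_simps)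
  show "fps_nth ?lhs m = fps_nth 0 m"
  proof (cases m)
    case 0
    then show ?thesis using rec by (simp add: algebra_simps)
  next
    case (Suc n)
    then show ?thesis using rec by (cases n) (simp_all add: algebra_simps)
  qed
qed

lemma one_minus_X_hg_fps_ode:
  fixes l g :: complex
  assumes g: "Re g \<ge> 1"
  defines "H \<equiv> (1 - fps_X) * hg_fps l g"
  shows "fps_X * (1 - fps_X) * fps_deriv (fps_deriv H) + fps_const g * (1 - fps_X) * fps_deriv H
    + fps_const l * H = 0"
proof -
  let ?F = "hg_fps l g"
  have H': "fps_deriv H = (1 - fps_X) * fps_deriv ?F - ?F"
    by (simp add: H_def algebra_simps)
  have H'': "fps_deriv (fps_deriv H) = (1 - fps_X) * fps_deriv (fps_deriv ?F) - 2 * fps_deriv ?F"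
    by (simp add: H' algebra_simps)
  have ring: "X * (1 - X) * ((1 - X) * F'' - 2 * F') + G * (1 - X) * ((1 - X) * F' - F)
      + L * ((1 - X) * F)
    = (1 - X) * (X * (1 - X) * F'' + (G - (G + 2) * X) * F' - (G - L) * F)"
    for X F F' F'' G L :: "complex fps"
    by (simp add: algebra_simps)
  have "fps_const (g + 2) = fps_const g + 2" "fps_const (g - l) = fps_const g - fps_const l"
    by (simp_all add: fps_numeral_fps_const)
  then have ode: "fps_X * (1 - fps_X) * fps_deriv (fps_deriv ?F)
      + (fps_const g - (fps_const g + 2) * fps_X) * fps_deriv ?F - (fps_const g - fps_const l) * ?F = 0"
    using hg_fps_ode[OF g, of l] by (simp only:)
  show ?thesis
    unfolding H'' unfolding H' unfolding H_def ring ode by simp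
qed

lemma fps_conv_radius_one_minus_X_hg_fps:
  assumes "Re g \<ge> 1"
  shows "fps_conv_radius ((1 - fps_X) * hg_fps l g) \<ge> 1"
proof -
  have "fps_conv_radius (1 - fps_X :: complex fps) = \<infinity>"
    using fps_conv_radius_diff[of 1 "fps_X :: complex fps"] by simp
  then show ?thesis
    using fps_conv_radius_mult[of "1 - fps_X" "hg_fps l g"] fps_conv_radius_hg_fps[OF assms, of l]
    by (simp add: order_trans)
qed

lemma eval_one_minus_X_hg_fps:
  assumes "Re g \<ge> 1" "norm w < 1"
  shows "eval_fps ((1 - fps_X) * hg_fps l g) w = (1 - w) * eval_fps (hg_fps l g) w"
proof -
  have "fps_conv_radius (1 - fps_X :: complex fps) = \<infinity>"
    using fps_conv_radius_diff[of 1 "fps_X :: complex fps"] by simp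
  moreover have "ereal (norm w) < fps_conv_radius (hg_fps l g)"
    using assms by (intro less_le_trans[OF _ fps_conv_radius_hg_fps]) auto
  ultimately show ?thesis by (simp add: eval_fps_mult eval_fps_diff)
qed

lemma eval_one_minus_X_hg_fps_ode:
  fixes l g w :: complex
  assumes g: "Re g \<ge> 1" and w: "norm w < 1"
  defines "H \<equiv> (1 - fps_X) * hg_fps l g"
  shows "w * (1 - w) * eval_fps (fps_deriv (fps_deriv H)) w + g * (1 - w) * eval_fps (fps_deriv H) w
    + l * eval_fps H w = 0"
proof -
  let ?R = "\<lambda>f :: complex fps. ereal (norm w) < fps_conv_radius f"
  have R_mult: "?R (f * h)" if "?R f" "?R h" for f h
    using that by (intro less_le_trans[OF _ fps_conv_radius_mult]) simp
  have R_add: "?R (f + h)" if "?R f" "?R h" for f h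
    using that by (intro less_le_trans[OF _ fps_conv_radius_add]) simp
  have R_diff: "?R (f - h)" if "?R f" "?R h" for f h
    using that by (intro less_le_trans[OF _ fps_conv_radius_diff]) simp
  have R_deriv: "?R (fps_deriv f)" if "?R f" for f
    using that by (rule less_le_trans[OF _ fps_conv_radius_deriv])
  have "?R H"
    using w unfolding H_def by (intro less_le_trans[OF _ fps_conv_radius_one_minus_X_hg_fps[OF g]]) simp
  note R = this R_deriv[OF this] R_deriv[OF R_deriv[OF this]]
  have [simp]: "?R fps_X" "?R 1" "?R (fps_const c)" for c by simp_all
  have "eval_fps (fps_X * (1 - fps_X) * fps_deriv (fps_deriv H) + fps_const g * (1 - fps_X) * fps_deriv H
    + fps_const l * H) w = 0"
    using one_minus_X_hg_fps_ode[OF g] by (simp add: H_def)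
  then show ?thesis
    by (simp add: eval_fps_add eval_fps_diff eval_fps_mult R R_mult R_add R_diff)
qed

lemma hg_fps_nth_eq_0:
  assumes "hg_ratio l g n = 0" "n < m"
  shows "fps_nth (hg_fps l g) m = 0"
  using assms unfolding hg_fps_def by (auto intro: prod_zero)

lemma eval_hg_fps_terminating:
  assumes "hg_ratio l g n = 0"
  shows "eval_fps (hg_fps l g) z = (\<Sum>m\<le>n. fps_nth (hg_fps l g) m * z ^ m)"
  unfolding eval_fps_def using hg_fps_nth_eq_0[OF assms]
  by (intro suminf_finite) (auto simp: not_le)

lemma hg_fps_nth_eq_pochhammer:
  fixes a b g l :: complex
  assumes ab: "a + b = g + 1" "a * b = g - l" and g: "Re g \<ge> 1"
  shows "fps_nth (hg_fps l g) m = pochhammer a m * pochhammer b m / (pochhammer g m * fact m)"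
proof (induction m)
  case (Suc m)
  have "(a + of_nat m) * (b + of_nat m) = a * b + (a + b) * of_nat m + of_nat m * of_nat m"
    by (simp add: algebra_simps)
  also have "\<dots> = (g + of_nat m) * (of_nat m + 1) - l"
    by (simp only: ab) (simp add: algebra_simps)
  finally have "hg_ratio l g m = (a + of_nat m) * (b + of_nat m) / ((g + of_nat m) * (of_nat m + 1))"
    using hg_denominator_nonzero[OF g, of m] by (simp add: hg_ratio_def diff_divide_distrib)
  then show ?case
    by (simp add: hg_fps_nth_Suc Suc.IH pochhammer_rec' times_divide_times_eq mult_ac)
qed (simp add: hg_fps_def)

lemma eval_hg_fps_of_real:
  fixes a b c l y :: real
  assumes "a + b = c + 1" "a * b = c - l" "c \<ge> 1" "\<bar>y\<bar> < 1"
  shows "eval_fps (hg_fps (of_real l) (of_real c)) (of_real y) = of_real (hyp2F1 a b c y)"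
proof -
  define r where "r m = pochhammer a m * pochhammer b m / (pochhammer c m * fact m) * y ^ m" for m
  have "complex_of_real a + of_real b = of_real c + 1"
    "complex_of_real a * of_real b = of_real c - of_real l"
    using arg_cong[OF assms(1), of complex_of_real] arg_cong[OF assms(2), of complex_of_real]
    by simp_all
  moreover have "Re (complex_of_real c) \<ge> 1" using assms(3) by simp
  ultimately have nth: "fps_nth (hg_fps (of_real l) (of_real c)) m * of_real y ^ m = of_real (r m)" for m
    by (simp add: hg_fps_nth_eq_pochhammer r_def pochhammer_of_real)
  have "summable (\<lambda>m. fps_nth (hg_fps (of_real l) (of_real c)) m * of_real y ^ m)"
    using assms by (intro summable_fps less_le_trans[OF _ fps_conv_radius_hg_fps]) auto
  then have "summable r" by (simp add: nth)
  then show ?thesis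
    unfolding eval_fps_def nth hyp2F1_def r_def[symmetric]
    by (intro sums_unique[symmetric] sums_of_real summable_sums)
qed

section \<open>Bounded functions and Abel's limit theorem\<close>

lemma tendsto_imp_Bfun:
  fixes f :: "'a \<Rightarrow> 'b::real_normed_vector"
  assumes "(f \<longlongrightarrow> l) F"
  shows "Bfun f F"
proof (rule BfunI)
  show "\<forall>\<^sub>F x in F. norm (f x) \<le> norm l + 1"
    using tendstoD[OF assms zero_less_one]
    by eventually_elim (metis dist_norm norm_triangle_sub add.commute add_le_cancel_left less_imp_le order_trans)
qed

lemma Bfun_mult:
  fixes f g :: "'a \<Rightarrow> 'b::real_normed_algebra"
  assumes "Bfun f F" "Bfun g F"
  shows "Bfun (\<lambda>x. f x * g x) F"
proof -
  obtain A B where "\<forall>\<^sub>F x in F. norm (f x) \<le> A" "\<forall>\<^sub>F x in F. norm (g x) \<le> B"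
    using assms by (metis BfunE)
  then have "\<forall>\<^sub>F x in F. norm (f x * g x) \<le> A * B"
  proof eventually_elim
    case (elim x)
    then show ?case
      by (meson order_trans[OF norm_mult_ineq] mult_mono norm_ge_zero order_trans)
  qed
  then show ?thesis by (rule BfunI)
qed

lemma tendsto_0_mult_Bfun:
  fixes f g :: "'a \<Rightarrow> 'b::real_normed_algebra"
  assumes "(f \<longlongrightarrow> 0) F" "Bfun g F"
  shows "((\<lambda>x. f x * g x) \<longlongrightarrow> 0) F"
  using bounded_bilinear.Zfun_prod_Bfun[OF bounded_bilinear_mult, of f F g] assms
  by (simp add: tendsto_Zfun_iff)

lemma Abel_mean_bound:
  fixes f :: "nat \<Rightarrow> 'a::{banach, real_normed_field}"
  assumes tail: "\<And>m. m \<ge> N \<Longrightarrow> norm (f m - L) \<le> e" and y: "0 \<le> y" "y < 1"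
  shows "norm ((1 - of_real y) * (\<Sum>m. f m * of_real y ^ m) - L)
    \<le> (1 - y) * (\<Sum>m<N. norm (f m - L)) + e"
proof -
  define C where "C = (\<Sum>m<N. norm (f m - L))"
  have e: "e \<ge> 0" using tail[of N] by (meson norm_ge_zero order_trans le_refl)
  have split: "norm (f m - L) * y ^ m \<le> (if m < N then norm (f m - L) else 0) + e * y ^ m" for m
    using tail[of m] y e by (auto simp: power_le_one mult_left_le mult_right_mono add_increasing2)
  have geom: "(\<lambda>m. y ^ m) sums (1 / (1 - y))" "(\<lambda>m. (of_real y :: 'a) ^ m) sums (1 / (1 - of_real y))"
    using y geometric_sums[of y] geometric_sums[of "of_real y :: 'a"] by simp_all
  have "(\<lambda>m. if m \<in> {..<N} then norm (f m - L) else 0) sums C"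
    unfolding C_def by (rule sums_If_finite_set) simp
  from sums_add[OF this sums_mult[OF geom(1), of e]]
  have bound_sums: "(\<lambda>m. (if m < N then norm (f m - L) else 0) + e * y ^ m) sums (C + e / (1 - y))"
    by simp
  have summable: "summable (\<lambda>m. norm ((f m - L) * of_real y ^ m))"
    by (rule summable_comparison_test'[OF sums_summable[OF bound_sums]])
       (use split y in \<open>simp add: norm_mult norm_power\<close>)
  have "(\<lambda>m. f m * of_real y ^ m) sums ((\<Sum>m. (f m - L) * of_real y ^ m) + L * (1 / (1 - of_real y)))"
    using sums_add[OF summable_sums[OF summable_norm_cancel[OF summable]] sums_mult[OF geom(2), of L]]
    by (simp add: algebra_simps)
  then have "(1 - of_real y) * (\<Sum>m. f m * of_real y ^ m) - L
      = (1 - of_real y) * (\<Sum>m. (f m - L) * of_real y ^ m)"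
    using y by (simp add: sums_iff field_simps)
  also have "norm \<dots> \<le> (1 - y) * (C + e / (1 - y))"
  proof -
    have "norm (\<Sum>m. (f m - L) * of_real y ^ m) \<le> (\<Sum>m. (if m < N then norm (f m - L) else 0) + e * y ^ m)"
      by (rule norm_suminf_le[OF _ sums_summable[OF bound_sums]])
         (use split y in \<open>simp add: norm_mult norm_power\<close>)
    also have "\<dots> = C + e / (1 - y)"
      using bound_sums by (simp add: sums_iff)
    finally have "norm (\<Sum>m. (f m - L) * of_real y ^ m) \<le> C + e / (1 - y)" .
    moreover have "norm (1 - of_real y :: 'a) = 1 - y"
      using y by (metis norm_of_real of_real_1 of_real_diff abs_of_nonneg diff_ge_0_iff_ge less_imp_le)
    ultimately show ?thesis
      using y by (simp add: norm_mult mult_left_mono)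
  qed
  also have "\<dots> = (1 - y) * C + e"
    using y by (simp add: field_simps)
  finally show ?thesis by (simp add: C_def)
qed

lemma Abel_mean_tendsto:
  fixes f :: "nat \<Rightarrow> 'a::{banach, real_normed_field}"
  assumes "f \<longlonglongrightarrow> L"
  shows "((\<lambda>y. (1 - of_real y) * (\<Sum>m. f m * of_real y ^ m)) \<longlongrightarrow> L) (at_left 1)"
proof (rule tendstoI)
  fix e :: real assume e: "e > 0"
  have "\<forall>\<^sub>F m in sequentially. dist (f m) L < e / 2"
    by (rule tendstoD[OF assms]) (use e in simp)
  then obtain N where N: "\<And>m. m \<ge> N \<Longrightarrow> norm (f m - L) \<le> e / 2"
    unfolding eventually_sequentially dist_norm by (meson less_imp_le)
  define C where "C = (\<Sum>m<N. norm (f m - L))"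
  have "((\<lambda>y. (1 - y) * C) \<longlongrightarrow> (1 - 1) * C) (at_left (1::real))"
    by (intro tendsto_intros)
  then have "\<forall>\<^sub>F y in at_left 1. (1 - y) * C < e / 2"
    by (rule order_tendstoD(2)) (use e in simp)
  moreover have "\<forall>\<^sub>F y in at_left (1::real). 0 < y \<and> y < 1"
    using eventually_at_left_real[of 0 "1::real"] by simp
  ultimately show "\<forall>\<^sub>F y in at_left 1. dist ((1 - of_real y) * (\<Sum>m. f m * of_real y ^ m)) L < e"
  proof eventually_elim
    case (elim y)
    then show ?case
      using Abel_mean_bound[of N f L "e / 2" y] N by (simp add: dist_norm C_def)
  qed
qed

section \<open>Linear second-order equations on an interval\<close>

lemma vector_differentiable_bound:
  fixes f :: "real \<Rightarrow> 'a::real_normed_vector"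
  assumes "a \<le> b"
    and "\<And>t. t \<in> {a..b} \<Longrightarrow> (f has_vector_derivative f' t) (at t)"
    and "\<And>t. t \<in> {a..b} \<Longrightarrow> norm (f' t) \<le> B"
  shows "norm (f b - f a) \<le> B * (b - a)"
proof -
  have "norm (f b - f a) \<le> B * norm (b - a)"
  proof (rule differentiable_bound[of "{a..b}" f "\<lambda>t h. h *\<^sub>R f' t"])
    fix t assume t: "t \<in> {a..b}"
    show "(f has_derivative (\<lambda>h. h *\<^sub>R f' t)) (at t within {a..b})"
      using assms(2)[OF t] by (simp add: has_vector_derivative_def has_derivative_at_withinI)
    show "onorm (\<lambda>h. h *\<^sub>R f' t) \<le> B"
      using assms(3)[OF t] by (simp add: onorm_scaleR_left onorm_id)
  qed (use assms(1) in auto)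
  then show ?thesis using assms(1) by simp
qed

lemma Taylor_bound_vector_derivative:
  fixes p :: "real \<Rightarrow> 'a::real_normed_vector"
  assumes h: "h > 0" and M: "M \<ge> 0"
    and p: "\<And>t. t \<in> {x..x + h} \<Longrightarrow> (p has_vector_derivative p' t) (at t)"
    and p': "\<And>t. t \<in> {x..x + h} \<Longrightarrow> (p' has_vector_derivative p'' t) (at t)"
    and p'': "\<And>t. t \<in> {x..x + h} \<Longrightarrow> norm (p'' t) \<le> M"
  shows "h * norm (p' x) \<le> norm (p (x + h)) + norm (p x) + M * h * h"
proof -
  have "norm (p' t - p' x) \<le> M * h" if t: "t \<in> {x..x + h}" for t
  proof -
    have "norm (p' t - p' x) \<le> M * (t - x)"
    proof (rule vector_differentiable_bound[where f' = p''])
      fix \<tau> assume "\<tau> \<in> {x..t}"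
      then have \<tau>: "\<tau> \<in> {x..x + h}" using t by auto
      show "(p' has_vector_derivative p'' \<tau>) (at \<tau>)" by (rule p'[OF \<tau>])
      show "norm (p'' \<tau>) \<le> M" by (rule p''[OF \<tau>])
    qed (use t in auto)
    also have "\<dots> \<le> M * h" using t M by (intro mult_left_mono) auto
    finally show ?thesis .
  qed
  moreover have "(p has_vector_derivative p' t) (at t within {x..x + h})" if "t \<in> {x..x + h}" for t
    using that by (auto intro!: has_vector_derivative_at_within[OF p])
  ultimately have "norm (p (x + h) - p x - ((x + h) - x) *\<^sub>R p' x) \<le> norm ((x + h) - x) * (M * h)"
    using h by (intro vector_differentiable_bound_linearization[where S = "{x..x + h}"])
      (auto simp: closed_segment_eq_real_ivl)
  then have "norm (p (x + h) - p x - h *\<^sub>R p' x) \<le> M * h * h"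
    using h by (simp add: mult_ac)
  moreover have "norm (h *\<^sub>R p' x) \<le> norm (p (x + h) - p x) + norm (p (x + h) - p x - h *\<^sub>R p' x)"
    using norm_triangle_ineq4[of "p (x + h) - p x" "p (x + h) - p x - h *\<^sub>R p' x"] by simp
  ultimately show ?thesis
    using h norm_triangle_ineq4[of "p (x + h)" "p x"] by simp
qed

lemma vector_derivative_tendsto_0_at_top:
  fixes p :: "real \<Rightarrow> 'a::real_normed_vector"
  assumes "\<forall>\<^sub>F x in at_top. (p has_vector_derivative p' x) (at x)"
    and "\<forall>\<^sub>F x in at_top. (p' has_vector_derivative p'' x) (at x)"
    and "Bfun p'' at_top" and lim: "(p \<longlongrightarrow> 0) at_top"
  shows "(p' \<longlongrightarrow> 0) at_top"
proof (rule tendstoI)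
  fix e :: real assume "e > 0"
  obtain M where "M > 0" "\<forall>\<^sub>F x in at_top. norm (p'' x) \<le> M"
    using assms(3) by (auto elim: BfunE)
  define h where "h = e / (2 * M)"
  have h: "h > 0" "M * h = e / 2"
    using \<open>e > 0\<close> \<open>M > 0\<close> by (auto simp: h_def)
  have "\<forall>\<^sub>F x in at_top. norm (p x) < h * e / 4"
    using tendstoD[OF lim, of "h * e / 4"] \<open>e > 0\<close> h by simp
  with assms(1,2) \<open>\<forall>\<^sub>F x in at_top. norm (p'' x) \<le> M\<close>
  have "\<forall>\<^sub>F x in at_top. (p has_vector_derivative p' x) (at x)
      \<and> (p' has_vector_derivative p'' x) (at x) \<and> norm (p'' x) \<le> M \<and> norm (p x) < h * e / 4"
    by (intro eventually_conj)
  then obtain b where b: "\<And>x. x \<ge> b \<Longrightarrow> (p has_vector_derivative p' x) (at x)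
      \<and> (p' has_vector_derivative p'' x) (at x) \<and> norm (p'' x) \<le> M \<and> norm (p x) < h * e / 4"
    unfolding eventually_at_top_linorder by blast
  have "norm (p' x) < e" if x: "x \<ge> b" for x
  proof -
    have "h * norm (p' x) \<le> norm (p (x + h)) + norm (p x) + M * h * h"
      using x h(1) \<open>M > 0\<close> b by (intro Taylor_bound_vector_derivative[where p'' = p'']) auto
    moreover have "norm (p x) < h * e / 4" "norm (p (x + h)) < h * e / 4"
      using b x h(1) by auto
    moreover have "M * h * h = h * e / 2"
      using h(2) by (simp add: mult.commute)
    ultimately have "h * norm (p' x) < h * e"
      by linarith
    then show ?thesis using h(1) by simp
  qed
  then show "\<forall>\<^sub>F x in at_top. dist (p' x) 0 < e"
    by (auto simp: eventually_at_top_linorder intro!: exI[of _ b])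
qed

lemma wronskian_constant:
  fixes p u :: "real \<Rightarrow> 'a::real_normed_field"
  assumes S: "convex S"
    and p: "\<And>x. x \<in> S \<Longrightarrow> (p has_vector_derivative p' x) (at x)"
    and p': "\<And>x. x \<in> S \<Longrightarrow> (p' has_vector_derivative p'' x) (at x)"
    and u: "\<And>x. x \<in> S \<Longrightarrow> (u has_vector_derivative u' x) (at x)"
    and u': "\<And>x. x \<in> S \<Longrightarrow> (u' has_vector_derivative u'' x) (at x)"
    and p_ode: "\<And>x. x \<in> S \<Longrightarrow> p'' x = G x * p x"
    and u_ode: "\<And>x. x \<in> S \<Longrightarrow> u'' x = G x * u x"
  obtains C where "\<And>x. x \<in> S \<Longrightarrow> p x * u' x - p' x * u x = C"
proof -
  have "((\<lambda>x. p x * u' x - p' x * u x) has_vector_derivative 0) (at x within S)" if x: "x \<in> S" for x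
  proof -
    have "((\<lambda>x. p x * u' x - p' x * u x) has_vector_derivative
        p x * u'' x + p' x * u' x - (p' x * u' x + p'' x * u x)) (at x)"
      using x by (intro has_vector_derivative_diff has_vector_derivative_mult p p' u u')
    then show ?thesis
      using x by (simp add: p_ode u_ode has_vector_derivative_at_within algebra_simps)
  qed
  then show ?thesis
    using has_vector_derivative_zero_constant[OF S] that by blast
qed

lemma Gronwall_zero:
  fixes e :: "real \<Rightarrow> real"
  assumes deriv: "\<And>t. t \<in> {lo..hi} \<Longrightarrow> (e has_real_derivative e' t) (at t)"
    and bound: "\<And>t. t \<in> {lo..hi} \<Longrightarrow> \<bar>e' t\<bar> \<le> K * e t"
    and nonneg: "\<And>t. t \<in> {lo..hi} \<Longrightarrow> e t \<ge> 0"
    and x0: "x0 \<in> {lo..hi}" "e x0 = 0" and x: "x \<in> {lo..hi}"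
  shows "e x = 0"
proof -
  have "e x * exp (- K * x) \<le> 0" if "x0 \<le> x"
  proof -
    have "e x * exp (- K * x) \<le> e x0 * exp (- K * x0)"
    proof (rule DERIV_nonpos_imp_nonincreasing[OF that])
      fix t assume "x0 \<le> t" "t \<le> x"
      then have t: "t \<in> {lo..hi}" using x0 x by auto
      have "((\<lambda>t. e t * exp (- K * t)) has_real_derivative (e' t - K * e t) * exp (- K * t)) (at t)"
        using deriv[OF t] by (auto intro!: derivative_eq_intros simp: algebra_simps)
      moreover have "(e' t - K * e t) * exp (- K * t) \<le> 0"
        using bound[OF t] by (intro mult_nonpos_nonneg) auto
      ultimately show "\<exists>y. ((\<lambda>t. e t * exp (- K * t)) has_real_derivative y) (at t) \<and> y \<le> 0"
        by blast
    qed
    then show ?thesis using x0 by simp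
  qed
  moreover have "e x * exp (K * x) \<le> 0" if "x \<le> x0"
  proof -
    have "e x * exp (K * x) \<le> e x0 * exp (K * x0)"
    proof (rule DERIV_nonneg_imp_nondecreasing[OF that])
      fix t assume "x \<le> t" "t \<le> x0"
      then have t: "t \<in> {lo..hi}" using x0 x by auto
      have "((\<lambda>t. e t * exp (K * t)) has_real_derivative (e' t + K * e t) * exp (K * t)) (at t)"
        using deriv[OF t] by (auto intro!: derivative_eq_intros simp: algebra_simps)
      moreover have "(e' t + K * e t) * exp (K * t) \<ge> 0"
        using bound[OF t] by (intro mult_nonneg_nonneg) auto
      ultimately show "\<exists>y. ((\<lambda>t. e t * exp (K * t)) has_real_derivative y) (at t) \<and> y \<ge> 0"
        by blast
    qed
    then show ?thesis using x0 by simp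
  qed
  ultimately have "e x \<le> 0" by (meson linear mult_le_0_iff exp_gt_zero not_le)
  then show ?thesis using nonneg[OF x] by simp
qed

(* The energy |w|^2 + |w'|^2 has derivative bounded by a multiple of itself, so by Gronwall it
   vanishes identically once it vanishes at one point. *)
lemma linear_ode_zero_initial_imp_zero:
  fixes w :: "real \<Rightarrow> complex"
  assumes S: "convex S" and G: "continuous_on S G"
    and w: "\<And>x. x \<in> S \<Longrightarrow> (w has_vector_derivative w' x) (at x)"
    and w': "\<And>x. x \<in> S \<Longrightarrow> (w' has_vector_derivative w'' x) (at x)"
    and ode: "\<And>x. x \<in> S \<Longrightarrow> w'' x = G x * w x"
    and x0: "x0 \<in> S" "w x0 = 0" "w' x0 = 0" and x: "x \<in> S"
  shows "w x = 0"
proof -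
  define lo hi where "lo = min x x0" and "hi = max x x0"
  have I: "{lo..hi} \<subseteq> S"
    using closed_segment_subset[OF x x0(1) S]
    by (auto simp: lo_def hi_def closed_segment_eq_real_ivl split: if_splits)
  obtain K where K: "K > 0" "\<And>t. t \<in> {lo..hi} \<Longrightarrow> norm (G t) \<le> K"
    using compact_imp_bounded[OF compact_continuous_image[OF continuous_on_subset[OF G I]]]
    by (auto simp: bounded_pos)
  define e where "e t = (norm (w t))\<^sup>2 + (norm (w' t))\<^sup>2" for t
  define e' where "e' t = 2 * inner (w t) (w' t) + 2 * inner (w' t) (w'' t)" for t
  have deriv: "(e has_real_derivative e' t) (at t)" if "t \<in> {lo..hi}" for t
  proof -
    have "t \<in> S" using that I by auto
    then show ?thesis
      unfolding e_def e'_def cmod_power2 inner_complex_def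
      by (auto intro!: derivative_eq_intros w w' simp: algebra_simps)
  qed
  have bound: "\<bar>e' t\<bar> \<le> (1 + K) * e t" if t: "t \<in> {lo..hi}" for t
  proof -
    have "norm (w'' t) \<le> K * norm (w t)"
      using t I K(2)[OF t] by (auto simp: ode norm_mult mult_right_mono)
    then have "\<bar>e' t\<bar> \<le> 2 * (norm (w t) * norm (w' t)) + 2 * (norm (w' t) * (K * norm (w t)))"
      unfolding e'_def
      using Cauchy_Schwarz_ineq2[of "w t" "w' t"] Cauchy_Schwarz_ineq2[of "w' t" "w'' t"]
        mult_left_mono[of "norm (w'' t)" "K * norm (w t)" "norm (w' t)"]
      by (simp add: abs_le_iff)
    also have "\<dots> = (1 + K) * (2 * norm (w t) * norm (w' t))" by (simp add: algebra_simps)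
    also have "\<dots> \<le> (1 + K) * e t"
      using sum_squares_bound[of "norm (w t)" "norm (w' t)"] K(1)
      by (intro mult_left_mono) (auto simp: e_def algebra_simps)
    finally show ?thesis .
  qed
  have "e x = 0"
    by (rule Gronwall_zero[OF deriv bound]) (use x0 in \<open>auto simp: e_def lo_def hi_def\<close>)
  then show ?thesis by (simp add: e_def add_nonneg_eq_0_iff)
qed

lemma square_integrable_of_exp_bound:
  fixes f :: "real \<Rightarrow> complex"
  assumes f: "continuous_on {a<..} f" and s: "s > 0"
    and bound: "\<And>x. x > a \<Longrightarrow> norm (f x) \<le> C * exp (- s * x)"
  shows "(\<lambda>x. (norm (f x))\<^sup>2) integrable_on {a<..}"
proof (rule measurable_bounded_by_integrable_imp_integrable)
  show "(\<lambda>x. (norm (f x))\<^sup>2) \<in> borel_measurable (lebesgue_on {a<..})"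
    by (rule continuous_imp_measurable_on_sets_lebesgue) (auto intro!: continuous_intros f)
  have "(\<lambda>x. exp (- (2 * s) * x)) integrable_on {a..}"
    using s by (intro integrable_on_exp_minus_to_infinity) simp
  from integrable_cmul[OF this, of "C\<^sup>2"]
  have "(\<lambda>x. C\<^sup>2 * exp (- (2 * s) * x)) integrable_on {a..}"
    by simp
  then show "(\<lambda>x. C\<^sup>2 * exp (- (2 * s) * x)) integrable_on {a<..}"
    by (rule integrable_spike_set) (auto intro: negligible_subset[of "{a}"])
  fix x assume "x \<in> {a<..}"
  then have "(norm (f x))\<^sup>2 \<le> (C * exp (- s * x))\<^sup>2"
    using bound by (intro power_mono) auto
  also have "(C * exp (- s * x))\<^sup>2 = C\<^sup>2 * exp (- (2 * s) * x)"
    by (simp add: power_mult_distrib power2_eq_square flip: exp_add)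
  finally show "norm ((norm (f x))\<^sup>2) \<le> C\<^sup>2 * exp (- (2 * s) * x)"
    by simp
qed simp

section \<open>The Jost solution\<close>

definition decay_rate :: "real \<Rightarrow> real \<Rightarrow> real \<Rightarrow> nat \<Rightarrow> real" where
  "decay_rate \<mu> \<delta> q n = \<mu> / (q * \<delta> * (1 + real n)) - (real n + 1) * \<delta> / 2"

lemma energy_eq_decay_rate: "energy \<mu> \<delta> q n = - (decay_rate \<mu> \<delta> q n)\<^sup>2 / 2"
  by (simp add: energy_def decay_rate_def algebra_simps)

lemma eigfun_eq:
  "eigfun \<mu> \<delta> q n x = exp (- decay_rate \<mu> \<delta> q n * x) * ((1 - q * exp (- \<delta> * x)) *
     hyp2F1 (- real n) (1 + 2 * \<mu> / (q * \<delta>\<^sup>2 * (1 + real n)))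
       (2 * \<mu> / (q * \<delta>\<^sup>2 * (1 + real n)) - real n) (q * exp (- \<delta> * x)))"
  by (simp add: eigfun_def decay_rate_def)

lemma decay_rate_pos_iff:
  assumes "\<mu> > 0" "\<delta> > 0" "q > 0"
  shows "decay_rate \<mu> \<delta> q n > 0 \<longleftrightarrow> real n < -1 + (1 / \<delta>) * sqrt (2 * \<mu> / q)"
proof -
  define N where "N = 1 + real n"
  have N: "N > 0" by (simp add: N_def)
  have "decay_rate \<mu> \<delta> q n > 0 \<longleftrightarrow> (\<delta> * N)\<^sup>2 < 2 * \<mu> / q"
    using assms N
    by (simp add: decay_rate_def N_def[symmetric] add.commute[of "real n"] field_simps power2_eq_square)
  also have "\<dots> \<longleftrightarrow> \<delta> * N < sqrt (2 * \<mu> / q)"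
  proof
    show "\<delta> * N < sqrt (2 * \<mu> / q)" if "(\<delta> * N)\<^sup>2 < 2 * \<mu> / q"
      using that by (rule real_less_rsqrt)
    show "(\<delta> * N)\<^sup>2 < 2 * \<mu> / q" if "\<delta> * N < sqrt (2 * \<mu> / q)"
    proof -
      have "sqrt ((\<delta> * N)\<^sup>2) < sqrt (2 * \<mu> / q)"
        using that assms N by simp
      then show ?thesis by (simp only: real_sqrt_less_iff)
    qed
  qed
  also have "\<dots> \<longleftrightarrow> real n < -1 + (1 / \<delta>) * sqrt (2 * \<mu> / q)"
    using assms by (simp add: N_def field_simps)
  finally show ?thesis .
qed

lemma one_plus_decay_rate_div:
  assumes "\<delta> > 0" "q > 0"
  shows "1 + 2 * decay_rate \<mu> \<delta> q n / \<delta> = 2 * \<mu> / (q * \<delta>\<^sup>2 * (1 + real n)) - real n"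
proof -
  define N where "N = 1 + real n"
  have "N > 0" by (simp add: N_def)
  then have "1 + 2 * (\<mu> / (q * \<delta> * N) - N * \<delta> / 2) / \<delta> = 2 * \<mu> / (q * \<delta>\<^sup>2 * N) + 1 - N"
    using assms by (simp add: field_simps power2_eq_square)
  then show ?thesis
    by (simp add: decay_rate_def N_def add.commute[of "real n"])
qed

(* The solution and its first two derivatives are written as holomorphic functions on the half
   plane Re z > a, so that complex differentiation applies, and restricted to the real axis. *)
locale jost_solution =
  fixes \<mu> \<delta> q E :: real
  assumes mu_pos: "\<mu> > 0" and delta_pos: "\<delta> > 0" and q_pos: "q > 0"
begin

definition a :: real where "a = ln q / \<delta>"
definition k :: complex where "k = csqrt (of_real (- 2 * E))"
definition lam :: complex where "lam = of_real (2 * \<mu> / (q * \<delta>\<^sup>2))"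
definition g :: complex where "g = 1 + 2 * k / of_real \<delta>"
definition H :: "complex fps" where "H = (1 - fps_X) * hg_fps lam g"
definition Y :: "complex \<Rightarrow> complex" where "Y z = of_real q * exp (- of_real \<delta> * z)"
definition G :: "real \<Rightarrow> complex" where "G x = of_real (2 * (pot \<mu> \<delta> q x - E))"

definition U :: "complex \<Rightarrow> complex" where
  "U z = exp (- k * z) * eval_fps H (Y z)"
definition U' :: "complex \<Rightarrow> complex" where
  "U' z = exp (- k * z) * (- k * eval_fps H (Y z) - of_real \<delta> * Y z * eval_fps (fps_deriv H) (Y z))"
definition U'' :: "complex \<Rightarrow> complex" where
  "U'' z = exp (- k * z) * (k\<^sup>2 * eval_fps H (Y z)
     + (2 * k + of_real \<delta>) * of_real \<delta> * Y z * eval_fps (fps_deriv H) (Y z)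
     + (of_real \<delta> * Y z)\<^sup>2 * eval_fps (fps_deriv (fps_deriv H)) (Y z))"

abbreviation u :: "real \<Rightarrow> complex" where "u x \<equiv> U (of_real x)"
abbreviation u' :: "real \<Rightarrow> complex" where "u' x \<equiv> U' (of_real x)"
abbreviation u'' :: "real \<Rightarrow> complex" where "u'' x \<equiv> U'' (of_real x)"

lemma k_squared: "k\<^sup>2 = of_real (- 2 * E)"
  by (simp add: k_def)

lemma Re_k_nonneg: "Re k \<ge> 0"
  by (simp add: k_def Re_csqrt)

lemma Re_g: "Re g \<ge> 1"
  using Re_k_nonneg delta_pos by (simp add: g_def)

lemma fps_conv_radius_H: "fps_conv_radius H \<ge> 1"
  unfolding H_def by (rule fps_conv_radius_one_minus_X_hg_fps[OF Re_g])

lemma Y_of_real: "Y (of_real x) = of_real (q * exp (- \<delta> * x))"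
  by (simp add: Y_def exp_of_real[symmetric])

lemma q_exp_less_1_iff: "q * exp (- \<delta> * x) < 1 \<longleftrightarrow> x > a"
proof -
  have "q * exp (- \<delta> * x) = exp (ln q - \<delta> * x)"
    using q_pos by (simp add: exp_diff exp_minus divide_inverse)
  then have "q * exp (- \<delta> * x) < 1 \<longleftrightarrow> ln q - \<delta> * x < 0"
    by (metis exp_less_cancel_iff exp_zero)
  also have "\<dots> \<longleftrightarrow> x > a"
    using delta_pos by (simp add: a_def field_simps)
  finally show ?thesis .
qed

lemma norm_Y_less_1: "Re z > a \<Longrightarrow> norm (Y z) < 1"
  using q_exp_less_1_iff[of "Re z"] q_pos by (simp add: Y_def norm_mult norm_exp_eq_Re)

lemma eval_H_has_field_derivative:
  assumes "norm w < 1"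
  shows "(eval_fps H has_field_derivative eval_fps (fps_deriv H) w) (at w)"
    and "(eval_fps (fps_deriv H) has_field_derivative eval_fps (fps_deriv (fps_deriv H)) w) (at w)"
proof -
  have "ereal (norm w) < fps_conv_radius H"
    using assms by (intro less_le_trans[OF _ fps_conv_radius_H]) simp
  then show "(eval_fps H has_field_derivative eval_fps (fps_deriv H) w) (at w)"
    and "(eval_fps (fps_deriv H) has_field_derivative eval_fps (fps_deriv (fps_deriv H)) w) (at w)"
    by (auto intro!: has_field_derivative_eval_fps intro: less_le_trans[OF _ fps_conv_radius_deriv])
qed

lemma Y_has_field_derivative: "(Y has_field_derivative - of_real \<delta> * Y z) (at z)"
  unfolding Y_def by (auto intro!: derivative_eq_intros)

lemma eval_H_Y_has_field_derivative:
  assumes "Re z > a"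
  shows "((\<lambda>z. eval_fps H (Y z)) has_field_derivative
      - of_real \<delta> * Y z * eval_fps (fps_deriv H) (Y z)) (at z)"
    and "((\<lambda>z. eval_fps (fps_deriv H) (Y z)) has_field_derivative
      - of_real \<delta> * Y z * eval_fps (fps_deriv (fps_deriv H)) (Y z)) (at z)"
  using DERIV_chain2[OF eval_H_has_field_derivative(1) Y_has_field_derivative]
    DERIV_chain2[OF eval_H_has_field_derivative(2) Y_has_field_derivative] norm_Y_less_1[OF assms]
  by (simp_all add: mult_ac)

lemma U_has_field_derivative: "Re z > a \<Longrightarrow> (U has_field_derivative U' z) (at z)"
  unfolding U_def U'_def
  by (auto intro!: derivative_eq_intros eval_H_Y_has_field_derivative simp: algebra_simps)

lemma U'_has_field_derivative: "Re z > a \<Longrightarrow> (U' has_field_derivative U'' z) (at z)"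
  unfolding U'_def U''_def
  by (auto intro!: derivative_eq_intros eval_H_Y_has_field_derivative Y_has_field_derivative
      simp: algebra_simps power2_eq_square)

lemma u_has_vector_derivative: "x > a \<Longrightarrow> (u has_vector_derivative u' x) (at x)"
  and u'_has_vector_derivative: "x > a \<Longrightarrow> (u' has_vector_derivative u'' x) (at x)"
  by (auto intro!: has_vector_derivative_real_field U_has_field_derivative U'_has_field_derivative)

lemma U_ode:
  assumes z: "Re z > a"
  shows "U'' z = (k\<^sup>2 - of_real (2 * \<mu> / q) * Y z / (1 - Y z)) * U z"
proof -
  define w h h' h'' where "w = Y z" and "h = eval_fps H w" and "h' = eval_fps (fps_deriv H) w"
    and "h'' = eval_fps (fps_deriv (fps_deriv H)) w"
  have "w \<noteq> 1" using norm_Y_less_1[OF z] by (auto simp: w_def)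
  have ode: "w * (1 - w) * h'' + g * (1 - w) * h' + lam * h = 0"
    unfolding h_def h'_def h''_def H_def
    by (rule eval_one_minus_X_hg_fps_ode[OF Re_g]) (use norm_Y_less_1[OF z] in \<open>simp add: w_def\<close>)
  have k: "k = of_real \<delta> * (g - 1) / 2" and c: "of_real (2 * \<mu> / q) = of_real \<delta>^2 * lam"
    using delta_pos q_pos by (simp_all add: g_def lam_def field_simps power2_eq_square)
  have "k\<^sup>2 * h + (2 * k + of_real \<delta>) * of_real \<delta> * w * h' + (of_real \<delta> * w)\<^sup>2 * h''
      - (k\<^sup>2 - of_real (2 * \<mu> / q) * w / (1 - w)) * h
    = of_real \<delta>^2 * w / (1 - w) * (w * (1 - w) * h'' + g * (1 - w) * h' + lam * h)"
    using \<open>w \<noteq> 1\<close> unfolding k c by (simp add: field_simps power2_eq_square)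
  then have "k\<^sup>2 * h + (2 * k + of_real \<delta>) * of_real \<delta> * w * h' + (of_real \<delta> * w)\<^sup>2 * h''
      = (k\<^sup>2 - of_real (2 * \<mu> / q) * w / (1 - w)) * h"
    by (simp add: ode)
  then show ?thesis
    by (simp add: U_def U''_def w_def h_def h'_def h''_def)
qed

lemma u_ode:
  assumes "x > a"
  shows "u'' x = G x * u x"
proof -
  have "q * exp (- \<delta> * x) < 1" using q_exp_less_1_iff assms by simp
  then have "2 * (pot \<mu> \<delta> q x - E)
      = - 2 * E - (2 * \<mu> / q) * (q * exp (- \<delta> * x)) / (1 - q * exp (- \<delta> * x))"
    using q_pos by (simp add: pot_def field_simps)
  then have "G x = k\<^sup>2 - of_real (2 * \<mu> / q) * Y (of_real x) / (1 - Y (of_real x))"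
    by (simp add: G_def Y_of_real k_squared)
  then show ?thesis
    using U_ode[of "of_real x"] assms by simp
qed

lemma continuous_on_G: "continuous_on {a<..} G"
proof -
  have "1 - q * exp (- \<delta> * x) \<noteq> 0" if "x \<in> {a<..}" for x
    using q_exp_less_1_iff[of x] that by simp
  then show ?thesis
    unfolding G_def pot_def by (intro continuous_intros) auto
qed

lemma G_tendsto: "(G \<longlongrightarrow> of_real (- 2 * E)) at_top"
proof -
  have "(pot \<mu> \<delta> q \<longlongrightarrow> 0) at_top"
    unfolding pot_def using delta_pos by real_asymp
  then show ?thesis
    unfolding G_def by (auto intro!: tendsto_eq_intros)
qed

lemma Y_tendsto_0: "((\<lambda>x. Y (of_real x)) \<longlongrightarrow> 0) at_top"
proof -
  have "((\<lambda>x. q * exp (- \<delta> * x)) \<longlongrightarrow> 0) at_top"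
    using delta_pos by real_asymp
  from tendsto_of_real[OF this, where 'a = complex] show ?thesis
    by (simp add: Y_of_real)
qed

lemma eval_H_Y_tendsto:
  "((\<lambda>x. eval_fps H (Y (of_real x))) \<longlongrightarrow> 1) at_top"
  "((\<lambda>x. eval_fps (fps_deriv H) (Y (of_real x))) \<longlongrightarrow> eval_fps (fps_deriv H) 0) at_top"
proof -
  have "isCont (eval_fps H) 0" "isCont (eval_fps (fps_deriv H)) 0"
    using eval_H_has_field_derivative[of 0] by (auto intro: DERIV_isCont)
  moreover have "eval_fps H 0 = 1"
    by (simp add: H_def eval_fps_at_0 hg_fps_def)
  ultimately show "((\<lambda>x. eval_fps H (Y (of_real x))) \<longlongrightarrow> 1) at_top"
    "((\<lambda>x. eval_fps (fps_deriv H) (Y (of_real x))) \<longlongrightarrow> eval_fps (fps_deriv H) 0) at_top"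
    using isCont_tendsto_compose[OF _ Y_tendsto_0] by metis+
qed

lemma norm_exp_minus_k: "norm (exp (- k * of_real x)) = exp (- Re k * x)"
  by (simp add: norm_exp_eq_Re)

lemma Bfun_exp_minus_k: "Bfun (\<lambda>x. exp (- k * of_real x)) at_top"
proof (rule BfunI)
  show "\<forall>\<^sub>F x in at_top. norm (exp (- k * of_real x)) \<le> 1"
    using eventually_ge_at_top[of 0]
    by eventually_elim (use Re_k_nonneg in \<open>simp add: norm_exp_minus_k mult_nonneg_nonneg\<close>)
qed

lemma Bfun_u: "Bfun u at_top"
  and Bfun_u': "Bfun u' at_top"
proof -
  have "Bfun (\<lambda>x. exp (- k * of_real x) * eval_fps H (Y (of_real x))) at_top"
    by (rule Bfun_mult[OF Bfun_exp_minus_k tendsto_imp_Bfun[OF eval_H_Y_tendsto(1)]])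
  then show "Bfun u at_top" by (simp add: U_def)
  have "((\<lambda>x. - k * eval_fps H (Y (of_real x))
        - of_real \<delta> * Y (of_real x) * eval_fps (fps_deriv H) (Y (of_real x)))
      \<longlongrightarrow> - k * 1 - of_real \<delta> * 0 * eval_fps (fps_deriv H) 0) at_top"
    by (intro tendsto_intros eval_H_Y_tendsto Y_tendsto_0)
  from Bfun_mult[OF Bfun_exp_minus_k tendsto_imp_Bfun[OF this]]
  show "Bfun u' at_top" by (simp add: U'_def)
qed

lemma u_eventually_nonzero: "\<forall>\<^sub>F x in at_top. u x \<noteq> 0"
  using tendsto_imp_eventually_ne[OF eval_H_Y_tendsto(1) one_neq_zero]
  by eventually_elim (simp add: U_def)

lemma norm_u_tendsto_1: "Re k = 0 \<Longrightarrow> ((\<lambda>x. norm (u x)) \<longlongrightarrow> 1) at_top"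
  using tendsto_norm[OF eval_H_Y_tendsto(1)] by (simp add: U_def norm_mult norm_exp_minus_k)

lemma u_tendsto_0: "Re k > 0 \<Longrightarrow> (u \<longlongrightarrow> 0) at_top"
proof -
  assume "Re k > 0"
  then have "((\<lambda>x. norm (exp (- k * of_real x))) \<longlongrightarrow> 0) at_top"
    unfolding norm_exp_minus_k by real_asymp
  then have "((\<lambda>x. exp (- k * of_real x)) \<longlongrightarrow> 0) at_top"
    by (rule tendsto_norm_zero_cancel)
  from tendsto_0_mult_Bfun[OF this tendsto_imp_Bfun[OF eval_H_Y_tendsto(1)]]
  show ?thesis by (simp add: U_def)
qed

(* As x decreases to a, Y x increases to 1, and Abel's theorem applies to the coefficients of
   the hypergeometric series, which converge to the infinite product. *)
lemma u_tendsto_at_right_a: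
  "(u \<longlongrightarrow> exp (- k * of_real a) * prodinf (hg_ratio lam g)) (at_right a)"
proof -
  define y where "y x = q * exp (- \<delta> * x)" for x
  have "(y \<longlongrightarrow> y a) (at_right a)"
    unfolding y_def by (intro tendsto_intros)
  moreover have "y a = 1"
    using q_pos delta_pos by (simp add: y_def a_def exp_minus exp_ln)
  moreover have "\<forall>\<^sub>F x in at_right a. y x < 1"
    using eventually_at_right_less[of a]
    by eventually_elim (use q_exp_less_1_iff in \<open>auto simp: y_def\<close>)
  ultimately have y: "filterlim y (at_left 1) (at_right a)"
    by (auto intro: tendsto_imp_filterlim_at_left)
  have "((\<lambda>t. (1 - of_real t) * eval_fps (hg_fps lam g) (of_real t))
      \<longlongrightarrow> prodinf (hg_ratio lam g)) (at_left 1)"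
    using Abel_mean_tendsto[OF hg_fps_nth_tendsto[OF Re_g]] by (simp add: eval_fps_def)
  from filterlim_compose[OF this y]
  have "((\<lambda>x. eval_fps H (Y (of_real x))) \<longlongrightarrow> prodinf (hg_ratio lam g)) (at_right a)"
  proof (rule Lim_transform_eventually)
    show "\<forall>\<^sub>F x in at_right a. (1 - of_real (y x)) * eval_fps (hg_fps lam g) (of_real (y x))
        = eval_fps H (Y (of_real x))"
      using eventually_at_right_less[of a]
    proof eventually_elim
      case (elim x)
      then show ?case
        using norm_Y_less_1[of "of_real x"] Re_g
        by (simp add: H_def Y_of_real y_def eval_one_minus_X_hg_fps)
    qed
  qed
  moreover have "((\<lambda>x. exp (- k * of_real x)) \<longlongrightarrow> exp (- k * of_real a)) (at_right a)"
    by (intro tendsto_intros)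
  ultimately show ?thesis
    unfolding U_def by (intro tendsto_mult)
qed

lemma hg_ratio_eq_0_iff: "hg_ratio lam g n = 0 \<longleftrightarrow> k = of_real (decay_rate \<mu> \<delta> q n)"
proof -
  define N where "N = 1 + real n"
  have N: "N > 0" by (simp add: N_def)
  have "(g + of_nat n) * (of_nat n + 1) = of_real N * (of_real N + 2 * k / of_real \<delta>)"
    by (simp add: g_def N_def algebra_simps)
  then have ratio: "hg_ratio lam g n = 0 \<longleftrightarrow> lam = of_real N * (of_real N + 2 * k / of_real \<delta>)"
    using hg_denominator_nonzero[OF Re_g, of n] by (auto simp: hg_ratio_def field_simps)
  have solve: "of_real L = of_real N * (of_real N + 2 * k / of_real \<delta>)
      \<longleftrightarrow> k = of_real ((L / N - N) * \<delta> / 2)" for L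
    using N delta_pos by (auto simp: field_simps)
  have rate: "(2 * \<mu> / (q * \<delta>\<^sup>2) / N - N) * \<delta> / 2 = decay_rate \<mu> \<delta> q n"
    using N delta_pos q_pos by (simp add: decay_rate_def N_def[symmetric] add.commute[of "real n"]
        field_simps power2_eq_square)
  show ?thesis
    using ratio unfolding lam_def solve rate .
qed

lemma hg_ratio_eq_0_and_Re_k_pos_iff:
  "hg_ratio lam g n = 0 \<and> Re k > 0 \<longleftrightarrow> decay_rate \<mu> \<delta> q n > 0 \<and> E = energy \<mu> \<delta> q n"
proof -
  let ?s = "decay_rate \<mu> \<delta> q n"
  have "k = of_real ?s \<and> ?s > 0 \<longleftrightarrow> ?s > 0 \<and> - 2 * E = ?s\<^sup>2"
  proof
    assume "k = of_real ?s \<and> ?s > 0"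
    then show "?s > 0 \<and> - 2 * E = ?s\<^sup>2"
      using k_squared by (metis of_real_eq_iff of_real_power)
  next
    assume "?s > 0 \<and> - 2 * E = ?s\<^sup>2"
    then show "k = of_real ?s \<and> ?s > 0"
      by (simp add: k_def csqrt_of_real)
  qed
  then show ?thesis
    by (auto simp: hg_ratio_eq_0_iff energy_eq_decay_rate)
qed

lemma hg_ratio_eq_0_imp_real_parameters:
  assumes "hg_ratio lam g n = 0"
  defines "t \<equiv> 2 * \<mu> / (q * \<delta>\<^sup>2 * (1 + real n))"
  shows "g = of_real (t - real n)" and "lam = of_real (t * (1 + real n))"
proof -
  show "lam = of_real (t * (1 + real n))"
    by (simp add: lam_def t_def)
  have "1 + 2 * decay_rate \<mu> \<delta> q n / \<delta> = t - real n"
    using one_plus_decay_rate_div[OF delta_pos q_pos] by (simp add: t_def)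
  moreover have "g = of_real (1 + 2 * decay_rate \<mu> \<delta> q n / \<delta>)"
    using assms(1) by (simp add: g_def hg_ratio_eq_0_iff[symmetric])
  ultimately show "g = of_real (t - real n)" by simp
qed

lemma u_eq_of_real_exp_mult:
  assumes "hg_ratio lam g n = 0" "x > a"
  defines "y \<equiv> q * exp (- \<delta> * x)"
  shows "u x = of_real (exp (- decay_rate \<mu> \<delta> q n * x))
    * ((1 - of_real y) * eval_fps (hg_fps lam g) (of_real y))"
proof -
  have "0 < y" "y < 1"
    using q_pos assms(2) q_exp_less_1_iff by (auto simp: y_def)
  then have "norm (complex_of_real y) < 1" by simp
  then have "eval_fps H (Y (of_real x)) = (1 - of_real y) * eval_fps (hg_fps lam g) (of_real y)"
    unfolding H_def Y_of_real y_def by (rule eval_one_minus_X_hg_fps[OF Re_g])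
  moreover have "exp (- k * of_real x) = of_real (exp (- decay_rate \<mu> \<delta> q n * x))"
    using assms(1) by (simp add: hg_ratio_eq_0_iff flip: exp_of_real)
  ultimately show ?thesis
    by (simp add: U_def)
qed

lemma u_eq_eigfun:
  assumes "hg_ratio lam g n = 0" "x > a"
  shows "u x = of_real (eigfun \<mu> \<delta> q n x)"
proof -
  define t where "t = 2 * \<mu> / (q * \<delta>\<^sup>2 * (1 + real n))"
  define y where "y = q * exp (- \<delta> * x)"
  have "\<bar>y\<bar> < 1"
    using q_pos assms(2) q_exp_less_1_iff by (simp add: y_def)
  moreover have "t - real n \<ge> 1"
    using Re_g hg_ratio_eq_0_imp_real_parameters(1)[OF assms(1)] by (simp add: t_def)
  ultimately have "eval_fps (hg_fps lam g) (of_real y) = of_real (hyp2F1 (- real n) (1 + t) (t - real n) y)"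
    unfolding hg_ratio_eq_0_imp_real_parameters[OF assms(1), folded t_def]
    by (intro eval_hg_fps_of_real) (auto simp: algebra_simps)
  then show ?thesis
    by (simp add: u_eq_of_real_exp_mult[OF assms] eigfun_eq t_def y_def)
qed

lemma norm_u_le:
  assumes "hg_ratio lam g n = 0" "x > a"
  shows "norm (u x)
    \<le> (\<Sum>m\<le>n. norm (fps_nth (hg_fps lam g) m)) * exp (- decay_rate \<mu> \<delta> q n * x)"
proof -
  define y where "y = q * exp (- \<delta> * x)"
  have y: "0 < y" "y < 1"
    using q_pos assms(2) q_exp_less_1_iff by (auto simp: y_def)
  have "norm (eval_fps (hg_fps lam g) (of_real y))
      \<le> (\<Sum>m\<le>n. norm (fps_nth (hg_fps lam g) m) * y ^ m)"
    unfolding eval_hg_fps_terminating[OF assms(1)]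
    by (rule order_trans[OF norm_sum]) (use y in \<open>simp add: norm_mult norm_power\<close>)
  also have "\<dots> \<le> (\<Sum>m\<le>n. norm (fps_nth (hg_fps lam g) m))"
    using y by (intro sum_mono) (simp add: mult_left_le power_le_one)
  finally have "norm (eval_fps (hg_fps lam g) (of_real y)) \<le> (\<Sum>m\<le>n. norm (fps_nth (hg_fps lam g) m))" .
  moreover have "norm (1 - complex_of_real y) \<le> 1"
  proof -
    have "1 - complex_of_real y = of_real (1 - y)" by simp
    then show ?thesis using y by (simp only: norm_of_real)
  qed
  ultimately have "norm ((1 - of_real y) * eval_fps (hg_fps lam g) (of_real y))
      \<le> 1 * (\<Sum>m\<le>n. norm (fps_nth (hg_fps lam g) m))"
    unfolding norm_mult by (intro mult_mono) auto
  then show ?thesis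
    by (simp add: u_eq_of_real_exp_mult[OF assms] norm_mult y_def mult.commute mult_right_mono)
qed

section \<open>Bound states\<close>

lemma bound_state_solution:
  assumes "bound_state \<mu> \<delta> q E \<psi>"
  obtains \<psi>' \<psi>'' where "\<And>x. x > a \<Longrightarrow> (\<psi> has_vector_derivative \<psi>' x) (at x)"
    "\<And>x. x > a \<Longrightarrow> (\<psi>' has_vector_derivative \<psi>'' x) (at x)"
    "\<And>x. x > a \<Longrightarrow> \<psi>'' x = G x * \<psi> x"
proof -
  from assms obtain \<psi>' \<psi>'' where \<psi>: "\<And>x. x > a \<Longrightarrow> (\<psi> has_vector_derivative \<psi>' x) (at x)"
      "\<And>x. x > a \<Longrightarrow> (\<psi>' has_vector_derivative \<psi>'' x) (at x)"
      "\<And>x. x > a \<Longrightarrow> - (1/2) * \<psi>'' x + of_real (pot \<mu> \<delta> q x) * \<psi> x = of_real E * \<psi> x"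
    unfolding bound_state_def Let_def a_def[symmetric] by blast
  have "\<psi>'' x = G x * \<psi> x" if "x > a" for x
  proof -
    have "- (1/2) * \<psi>'' x = of_real E * \<psi> x - of_real (pot \<mu> \<delta> q x) * \<psi> x"
      using \<psi>(3)[OF that] by (simp add: eq_diff_eq)
    then have "\<psi>'' x = - 2 * (of_real E * \<psi> x - of_real (pot \<mu> \<delta> q x) * \<psi> x)"
      by (simp add: algebra_simps)
    then show ?thesis by (simp add: G_def algebra_simps)
  qed
  with \<psi>(1,2) show ?thesis using that by blast
qed

lemma wronskian_with_u_eq_0:
  assumes \<psi>: "\<And>x. x > a \<Longrightarrow> (\<psi> has_vector_derivative \<psi>' x) (at x)"
    "\<And>x. x > a \<Longrightarrow> (\<psi>' has_vector_derivative \<psi>'' x) (at x)"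
    and \<psi>_ode: "\<And>x. x > a \<Longrightarrow> \<psi>'' x = G x * \<psi> x"
    and \<psi>_top: "(\<psi> \<longlongrightarrow> 0) at_top"
    and x: "x > a"
  shows "\<psi> x * u' x - \<psi>' x * u x = 0"
proof -
  have "((\<lambda>x. G x * \<psi> x) \<longlongrightarrow> of_real (- 2 * E) * 0) at_top"
    by (intro tendsto_mult G_tendsto \<psi>_top)
  moreover have "\<forall>\<^sub>F x in at_top. G x * \<psi> x = \<psi>'' x"
    using eventually_gt_at_top[of a] by eventually_elim (simp add: \<psi>_ode)
  ultimately have "(\<psi>'' \<longlongrightarrow> 0) at_top"
    by (simp add: tendsto_cong)
  have \<psi>'_top: "(\<psi>' \<longlongrightarrow> 0) at_top"
  proof (rule vector_derivative_tendsto_0_at_top[OF _ _ tendsto_imp_Bfun \<psi>_top])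
    show "\<forall>\<^sub>F x in at_top. (\<psi> has_vector_derivative \<psi>' x) (at x)"
      using eventually_gt_at_top[of a] by eventually_elim (rule \<psi>(1))
    show "\<forall>\<^sub>F x in at_top. (\<psi>' has_vector_derivative \<psi>'' x) (at x)"
      using eventually_gt_at_top[of a] by eventually_elim (rule \<psi>(2))
  qed fact
  obtain W where W: "\<And>x. x \<in> {a<..} \<Longrightarrow> \<psi> x * u' x - \<psi>' x * u x = W"
    using wronskian_constant[of "{a<..}" \<psi> \<psi>' \<psi>'' u u' u'' G] \<psi> \<psi>_ode
      u_has_vector_derivative u'_has_vector_derivative u_ode by auto
  have "((\<lambda>x. \<psi> x * u' x - \<psi>' x * u x) \<longlongrightarrow> 0 - 0) at_top"
    by (intro tendsto_diff tendsto_0_mult_Bfun \<psi>_top \<psi>'_top Bfun_u Bfun_u')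
  moreover have "\<forall>\<^sub>F x in at_top. \<psi> x * u' x - \<psi>' x * u x = W"
    using eventually_gt_at_top[of a] by eventually_elim (simp add: W)
  ultimately have "((\<lambda>_::real. W) \<longlongrightarrow> 0) at_top"
    by (simp add: tendsto_cong)
  then show ?thesis
    using W x by (simp add: tendsto_const_iff)
qed

(* With vanishing Wronskian, \<psi> and a multiple of u have the same Cauchy data at a point where u
   does not vanish. *)
lemma solution_tendsto_0_imp_multiple_of_u:
  assumes \<psi>: "\<And>x. x > a \<Longrightarrow> (\<psi> has_vector_derivative \<psi>' x) (at x)"
    "\<And>x. x > a \<Longrightarrow> (\<psi>' has_vector_derivative \<psi>'' x) (at x)"
    and \<psi>_ode: "\<And>x. x > a \<Longrightarrow> \<psi>'' x = G x * \<psi> x"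
    and \<psi>_top: "(\<psi> \<longlongrightarrow> 0) at_top"
  obtains c where "\<And>x. x > a \<Longrightarrow> \<psi> x = c * u x"
proof -
  obtain x1 where x1: "x1 > a" "u x1 \<noteq> 0"
    using eventually_conj[OF eventually_gt_at_top[of a] u_eventually_nonzero]
    by (auto simp: eventually_at_top_linorder)
  define c where "c = \<psi> x1 / u x1"
  have "\<psi> x - c * u x = 0" if x: "x > a" for x
  proof (rule linear_ode_zero_initial_imp_zero[where S = "{a<..}" and G = G])
    show "((\<lambda>x. \<psi> x - c * u x) has_vector_derivative \<psi>' y - c * u' y) (at y)"
      "((\<lambda>x. \<psi>' x - c * u' x) has_vector_derivative \<psi>'' y - c * u'' y) (at y)"
      "\<psi>'' y - c * u'' y = G y * (\<psi> y - c * u y)" if "y \<in> {a<..}" for y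
      using that by (auto intro!: derivative_eq_intros \<psi>(1,2) u_has_vector_derivative
          u'_has_vector_derivative simp: \<psi>_ode u_ode algebra_simps)
    show "\<psi> x1 - c * u x1 = 0" "\<psi>' x1 - c * u' x1 = 0"
      using x1 wronskian_with_u_eq_0[OF \<psi> \<psi>_ode \<psi>_top x1(1)] by (auto simp: c_def field_simps)
  qed (use x x1 continuous_on_G in auto)
  then show ?thesis by (intro that[of c]) simp
qed

lemma bound_state_imp_multiple_of_u:
  assumes "bound_state \<mu> \<delta> q E \<psi>"
  obtains c where "c \<noteq> 0" "\<And>x. x > a \<Longrightarrow> \<psi> x = c * u x"
proof -
  obtain \<psi>' \<psi>'' where \<psi>: "\<And>x. x > a \<Longrightarrow> (\<psi> has_vector_derivative \<psi>' x) (at x)"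
    "\<And>x. x > a \<Longrightarrow> (\<psi>' has_vector_derivative \<psi>'' x) (at x)" "\<And>x. x > a \<Longrightarrow> \<psi>'' x = G x * \<psi> x"
    using bound_state_solution[OF assms] by blast
  have "(\<psi> \<longlongrightarrow> 0) at_top" and nonzero: "\<exists>x>a. \<psi> x \<noteq> 0"
    using assms by (simp_all add: bound_state_def Let_def a_def)
  then obtain c where c: "\<And>x. x > a \<Longrightarrow> \<psi> x = c * u x"
    using solution_tendsto_0_imp_multiple_of_u[OF \<psi>] by blast
  moreover have "c \<noteq> 0"
    using nonzero c by force
  ultimately show ?thesis using that by blast
qed

lemma multiple_of_u_bound_state_imp:
  assumes "bound_state \<mu> \<delta> q E \<psi>" "c \<noteq> 0" "\<And>x. x > a \<Longrightarrow> \<psi> x = c * u x"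
  shows "Re k > 0" and "\<exists>n. hg_ratio lam g n = 0"
proof -
  have \<psi>_top: "(\<psi> \<longlongrightarrow> 0) at_top" and \<psi>_a: "(\<psi> \<longlongrightarrow> 0) (at_right a)"
    using assms(1) by (simp_all add: bound_state_def Let_def a_def)
  have top: "\<forall>\<^sub>F x in at_top. c * u x = \<psi> x"
    using eventually_gt_at_top[of a] by eventually_elim (simp add: assms(3))
  show "Re k > 0"
  proof (rule ccontr)
    assume "\<not> Re k > 0"
    then have "Re k = 0" using Re_k_nonneg by simp
    then have "((\<lambda>x. norm (c * u x)) \<longlongrightarrow> norm c * 1) at_top"
      unfolding norm_mult by (intro tendsto_mult tendsto_const norm_u_tendsto_1)
    moreover have "((\<lambda>x. c * u x) \<longlongrightarrow> 0) at_top"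
      using \<psi>_top top by (simp add: tendsto_cong)
    then have "((\<lambda>x. norm (c * u x)) \<longlongrightarrow> 0) at_top"
      by (rule tendsto_norm_zero)
    ultimately show False
      using assms(2) tendsto_unique[OF trivial_limit_at_top_linorder] by fastforce
  qed
  have "((\<lambda>x. c * u x) \<longlongrightarrow> c * (exp (- k * of_real a) * prodinf (hg_ratio lam g))) (at_right a)"
    by (intro tendsto_mult tendsto_const u_tendsto_at_right_a)
  moreover have "\<forall>\<^sub>F x in at_right a. c * u x = \<psi> x"
    using eventually_at_right_less[of a] by eventually_elim (simp add: assms(3))
  ultimately have "((\<lambda>x. c * u x) \<longlongrightarrow> 0) (at_right a)"
    and "((\<lambda>x. c * u x) \<longlongrightarrow> c * (exp (- k * of_real a) * prodinf (hg_ratio lam g))) (at_right a)"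
    using \<psi>_a by (simp_all add: tendsto_cong)
  then have "prodinf (hg_ratio lam g) = 0"
    using assms(2) tendsto_unique[OF trivial_limit_at_right_real] by fastforce
  then show "\<exists>n. hg_ratio lam g n = 0"
    using prodinf_hg_ratio_eq_0_iff[OF Re_g] by simp
qed

lemma multiple_of_u_has_vector_derivative:
  assumes \<psi>: "\<And>x. x > a \<Longrightarrow> \<psi> x = c * u x" and x: "x > a"
  shows "(\<psi> has_vector_derivative c * u' x) (at x)"
proof (rule has_vector_derivative_transform_within_open[where S = "{a<..}"])
  show "((\<lambda>x. c * u x) has_vector_derivative c * u' x) (at x)"
    using x by (intro has_vector_derivative_mult_right u_has_vector_derivative)
qed (use x \<psi> in auto)

lemma multiple_of_u_square_integrable:
  assumes "Re k > 0" "hg_ratio lam g n = 0" and \<psi>: "\<And>x. x > a \<Longrightarrow> \<psi> x = c * u x"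
  shows "(\<lambda>x. (norm (\<psi> x))\<^sup>2) integrable_on {a<..}"
proof (rule square_integrable_of_exp_bound)
  show "continuous_on {a<..} \<psi>"
    using multiple_of_u_has_vector_derivative[OF \<psi>]
    by (auto intro!: continuous_at_imp_continuous_on has_vector_derivative_continuous)
  show "decay_rate \<mu> \<delta> q n > 0"
    using assms(1,2) hg_ratio_eq_0_iff by simp
  show "norm (\<psi> x) \<le> (norm c * (\<Sum>m\<le>n. norm (fps_nth (hg_fps lam g) m)))
      * exp (- decay_rate \<mu> \<delta> q n * x)" if "x > a" for x
    using norm_u_le[OF assms(2) that] that
    by (simp add: \<psi> norm_mult mult.assoc mult_left_mono)
qed

lemma multiple_of_u_imp_bound_state:
  assumes "Re k > 0" "hg_ratio lam g n = 0" "c \<noteq> 0" and \<psi>: "\<And>x. x > a \<Longrightarrow> \<psi> x = c * u x"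
  shows "bound_state \<mu> \<delta> q E \<psi>"
proof -
  have "\<exists>\<psi>' \<psi>''. \<forall>x>a. (\<psi> has_vector_derivative \<psi>' x) (at x)
      \<and> (\<psi>' has_vector_derivative \<psi>'' x) (at x)
      \<and> - (1/2) * \<psi>'' x + of_real (pot \<mu> \<delta> q x) * \<psi> x = of_real E * \<psi> x"
  proof (rule exI[of _ "\<lambda>x. c * u' x"], rule exI[of _ "\<lambda>x. c * u'' x"], intro allI impI conjI)
    fix x assume x: "x > a"
    show "(\<psi> has_vector_derivative c * u' x) (at x)"
      by (rule multiple_of_u_has_vector_derivative[OF \<psi> x])
    show "((\<lambda>x. c * u' x) has_vector_derivative c * u'' x) (at x)"
      by (intro has_vector_derivative_mult_right u'_has_vector_derivative x)
    show "- (1/2) * (c * u'' x) + of_real (pot \<mu> \<delta> q x) * \<psi> x = of_real E * \<psi> x"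
      by (simp add: u_ode[OF x] \<psi>[OF x] G_def algebra_simps)
  qed
  moreover have "(\<psi> \<longlongrightarrow> 0) (at_right a)"
  proof -
    have "((\<lambda>x. c * u x) \<longlongrightarrow> c * (exp (- k * of_real a) * prodinf (hg_ratio lam g))) (at_right a)"
      by (intro tendsto_mult tendsto_const u_tendsto_at_right_a)
    moreover have "prodinf (hg_ratio lam g) = 0"
      using prodinf_hg_ratio_eq_0_iff[OF Re_g] assms(2) by blast
    moreover have "\<forall>\<^sub>F x in at_right a. c * u x = \<psi> x"
      using eventually_at_right_less[of a] by eventually_elim (simp add: \<psi>)
    ultimately show ?thesis by (simp add: tendsto_cong)
  qed
  moreover have "(\<psi> \<longlongrightarrow> 0) at_top"
  proof -
    have "((\<lambda>x. c * u x) \<longlongrightarrow> c * 0) at_top"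
      by (intro tendsto_mult tendsto_const u_tendsto_0 assms(1))
    moreover have "\<forall>\<^sub>F x in at_top. c * u x = \<psi> x"
      using eventually_gt_at_top[of a] by eventually_elim (simp add: \<psi>)
    ultimately show ?thesis by (simp add: tendsto_cong)
  qed
  moreover have "\<exists>x>a. \<psi> x \<noteq> 0"
    using eventually_conj[OF eventually_gt_at_top[of a] u_eventually_nonzero] assms(3)
    by (auto simp: eventually_at_top_linorder \<psi>)
  ultimately show ?thesis
    using multiple_of_u_square_integrable[OF assms(1,2) \<psi>]
    unfolding bound_state_def Let_def a_def[symmetric] by blast
qed

lemma bound_state_imp_eigenstate:
  assumes "bound_state \<mu> \<delta> q E \<psi>"
  obtains n c where "decay_rate \<mu> \<delta> q n > 0" "E = energy \<mu> \<delta> q n" "c \<noteq> 0"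
    "\<And>x. x > a \<Longrightarrow> \<psi> x = c * of_real (eigfun \<mu> \<delta> q n x)"
proof -
  obtain c where c: "c \<noteq> 0" "\<And>x. x > a \<Longrightarrow> \<psi> x = c * u x"
    using bound_state_imp_multiple_of_u[OF assms] by blast
  obtain n where n: "hg_ratio lam g n = 0"
    using multiple_of_u_bound_state_imp(2)[OF assms c] by blast
  then have "decay_rate \<mu> \<delta> q n > 0" "E = energy \<mu> \<delta> q n"
    using hg_ratio_eq_0_and_Re_k_pos_iff multiple_of_u_bound_state_imp(1)[OF assms c] by blast+
  moreover have "\<psi> x = c * of_real (eigfun \<mu> \<delta> q n x)" if "x > a" for x
    using c(2)[OF that] u_eq_eigfun[OF n that] by simp
  ultimately show ?thesis
    using that c(1) by blast
qed

lemma eigenstate_imp_bound_state: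
  assumes "decay_rate \<mu> \<delta> q n > 0" "E = energy \<mu> \<delta> q n" "c \<noteq> 0"
    and "\<And>x. x > a \<Longrightarrow> \<psi> x = c * of_real (eigfun \<mu> \<delta> q n x)"
  shows "bound_state \<mu> \<delta> q E \<psi>"
proof -
  have "hg_ratio lam g n = 0" "Re k > 0"
    using hg_ratio_eq_0_and_Re_k_pos_iff assms(1,2) by blast+
  then show ?thesis
    using assms(3,4) by (intro multiple_of_u_imp_bound_state) (auto simp: u_eq_eigfun)
qed

lemma bound_state_iff:
  "bound_state \<mu> \<delta> q E \<psi> \<longleftrightarrow> (\<exists>n c. decay_rate \<mu> \<delta> q n > 0 \<and> E = energy \<mu> \<delta> q n \<and> c \<noteq> 0 \<and>
     (\<forall>x > a. \<psi> x = c * of_real (eigfun \<mu> \<delta> q n x)))"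
    (is "_ \<longleftrightarrow> ?eigenstate")
proof
  assume "bound_state \<mu> \<delta> q E \<psi>"
  then obtain n c where "decay_rate \<mu> \<delta> q n > 0" "E = energy \<mu> \<delta> q n" "c \<noteq> 0"
    "\<And>x. x > a \<Longrightarrow> \<psi> x = c * of_real (eigfun \<mu> \<delta> q n x)"
    by (elim bound_state_imp_eigenstate) blast
  then show ?eigenstate by blast
next
  assume ?eigenstate
  then obtain n c where "decay_rate \<mu> \<delta> q n > 0" "E = energy \<mu> \<delta> q n" "c \<noteq> 0"
    "\<forall>x > a. \<psi> x = c * of_real (eigfun \<mu> \<delta> q n x)"
    by blast
  then show "bound_state \<mu> \<delta> q E \<psi>"
    by (intro eigenstate_imp_bound_state) auto
qed

end

theorem mainTheorem1:
  fixes \<mu> \<delta> q E :: real and \<psi> :: "real \<Rightarrow> complex"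
  assumes "\<mu> > 0" and "\<delta> > 0" and "q > 0"
  shows "bound_state \<mu> \<delta> q E \<psi> \<longleftrightarrow>
     (\<exists>n::nat. \<exists>c::complex.
        real n < -1 + (1/\<delta>) * sqrt (2 * \<mu> / q) \<and>
        E = energy \<mu> \<delta> q n \<and> c \<noteq> 0 \<and>
        (\<forall>x > ln q / \<delta>. \<psi> x = c * of_real (eigfun \<mu> \<delta> q n x)))"
proof -
  interpret J: jost_solution \<mu> \<delta> q E
    using assms by unfold_locales
  show ?thesis
    unfolding J.bound_state_iff J.a_def decay_rate_pos_iff[OF assms] ..
qed

end
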